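(* Let $f,g\in H^2_\tau(\mathcal S)$ be such that $|g(x)|=|f(x)|$ for all $x\in\mathbb R$ and $$|g(z)|=|f(z)|\qquad\text{for all } z \text{ in the open segment } (a-e^{i\theta},\,a+e^{i\theta})=\{a+te^{i\theta}: t\in(-1,1)\},$$ where $a\in\mathbb R$ and $\theta\notin\pi\mathbb Q$. Then $g=cf$ for some constant $c\in\mathbb C$ with $|c|=1$.
   Context: $\mathcal S=\{z\in\mathbb C:|\mathrm{Im}\,z|<1\}$ is the strip, and $H^2_\tau(\mathcal S)$ is the space of holomorphic functions $f$ on $\mathcal S$ with $\sup_{|y|<1}\int_{\mathbb R}|f(t+iy)|^2\,\mathrm dt<\infty$. *)

theory Defs
  imports "HOL-Analysis.Analysis"
begin

definition strip :: "complex set" where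
  "strip = {z. \<bar>Im z\<bar> < 1}"

definition H2_strip :: "(complex \<Rightarrow> complex) set" where
  "H2_strip = {f. f holomorphic_on strip \<and>
     (\<exists>B::real. \<forall>y::real. \<bar>y\<bar> < 1 \<longrightarrow>
        integrable lborel (\<lambda>t::real. (cmod (f (Complex t y)))\<^sup>2) \<and>
        (\<integral>t. (cmod (f (Complex t y)))\<^sup>2 \<partial>lborel) \<le> B)}"

end

theory Submission
  imports Defs "HOL-Complex_Analysis.Complex_Analysis"
begin

(* Write f^R z = cnj (f (R z)) for the reflection R in a line. If |f| = |g| on a segment of
   the mirror line, the identity theorem gives g * g^R = f * f^R on every connected R-invariant
   domain. Applying this to the real axis (on the strip) and to the line through a at angle
   theta (on the unit disc around a), and composing the two reflections into the rotation
   sigma z = a + e^(-2 i theta) (z - a), yields g (sigma z) * f z = f (sigma z) * g z near a,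
   unless f vanishes on the segment (and then f = g = 0). Since e^(-2 i theta) is not a root
   of unity, comparing leading terms (z - a)^m h(z) at a shows that every nonzero solution of
   this identity vanishes to exactly the order of f at a; so g - c f, with c the ratio of the
   leading coefficients, is zero. Finally |c| = 1 because |g| = |f| on the segment. *)

lemma cis_power_eq_1_imp_Rats:
  assumes "cis x ^ n = 1" "n > 0"
  shows "x / pi \<in> \<rat>"
proof -
  have "cis (real n * x) = 1"
    using assms(1) by (simp add: Complex.DeMoivre)
  then have "exp (\<i> * complex_of_real (real n * x)) = 1"
    by (simp add: cis_conv_exp)
  then obtain k :: int where "real n * x = of_int (2 * k) * pi"
    by (auto simp: exp_eq_1)
  then have "x / pi = of_int (2 * k) / of_nat n"
    using assms(2) by (simp add: field_simps)
  then show ?thesis by simp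
qed

lemma cis_multiple_not_root_of_unity:
  assumes "\<theta> / pi \<notin> \<rat>" "k \<noteq> 0" "n > 0"
  shows "cis (of_int k * \<theta>) ^ n \<noteq> 1"
proof
  assume "cis (of_int k * \<theta>) ^ n = 1"
  then have "of_int k * \<theta> / pi \<in> \<rat>"
    using cis_power_eq_1_imp_Rats assms(3) by blast
  then have "(of_int k * \<theta> / pi) / of_int k \<in> \<rat>"
    by (rule Rats_divide) simp_all
  with assms(1,2) show False
    by simp
qed

lemma power_eq_power_imp_eq_if_not_root_of_unity:
  fixes \<mu> :: "'a :: field"
  assumes "\<mu> \<noteq> 0" "\<And>n. n > 0 \<Longrightarrow> \<mu> ^ n \<noteq> 1" "\<mu> ^ k = \<mu> ^ m"
  shows "k = m"
proof -
  have "\<mu> ^ (j - i) = 1" if "\<mu> ^ i = \<mu> ^ j" "i \<le> j" for i j :: nat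
    using that assms(1) by (simp add: power_diff)
  then show ?thesis
    using assms(2,3) by (metis linorder_le_cases zero_less_diff antisym_conv2)
qed

lemma holomorphic_factor_order:
  assumes "f holomorphic_on S" "open S" "connected S" "\<xi> \<in> S" "\<exists>w\<in>S. f w \<noteq> 0"
  obtains \<rho> h n where "0 < \<rho>" "ball \<xi> \<rho> \<subseteq> S" "h holomorphic_on ball \<xi> \<rho>" "h \<xi> \<noteq> 0"
    "\<And>w. w \<in> ball \<xi> \<rho> \<Longrightarrow> f w = (w - \<xi>) ^ n * h w"
proof -
  obtain \<rho> where "0 < \<rho>" "cball \<xi> \<rho> \<subseteq> S" "zor_poly f \<xi> holomorphic_on cball \<xi> \<rho>"
    "\<forall>w\<in>cball \<xi> \<rho>. f w = zor_poly f \<xi> w * (w - \<xi>) ^ nat (zorder f \<xi>) \<and> zor_poly f \<xi> w \<noteq> 0"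
    using zorder_exist_zero[OF assms] by blast
  then show ?thesis
    by (intro that[of \<rho> "zor_poly f \<xi>" "nat (zorder f \<xi>)"])
       (auto intro: holomorphic_on_subset simp: mult.commute)
qed

lemma holomorphic_power_factor_cancel:
  assumes "h holomorphic_on ball \<xi> r" "k holomorphic_on ball \<xi> r"
    and "\<And>w. w \<in> ball \<xi> r \<Longrightarrow> (w - \<xi>) ^ n * h w = (w - \<xi>) ^ n * k w"
    and "z \<in> ball \<xi> r"
  shows "h z = k z"
proof (rule analytic_continuation_open[of "ball \<xi> r - {\<xi>}" "ball \<xi> r" h k])
  have "0 < r" using assms(4) by (metis mem_ball zero_le_dist le_less_trans)
  then have "\<xi> + of_real (r / 2) \<in> ball \<xi> r - {\<xi>}"
    by (simp add: dist_norm)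
  then show "ball \<xi> r - {\<xi>} \<noteq> {}" by blast
  show "h w = k w" if "w \<in> ball \<xi> r - {\<xi>}" for w
    using assms(3)[of w] that by simp
qed (use assms in auto)

lemma rotation_identity_power_eq:
  fixes f g h1 h2 :: "complex \<Rightarrow> complex"
  assumes "0 < r" "norm \<mu> \<le> 1"
    and hol: "h1 holomorphic_on ball \<xi> r" "h2 holomorphic_on ball \<xi> r"
    and nz: "h1 \<xi> \<noteq> 0" "h2 \<xi> \<noteq> 0"
    and f: "\<And>w. w \<in> ball \<xi> r \<Longrightarrow> f w = (w - \<xi>) ^ m * h1 w"
    and g: "\<And>w. w \<in> ball \<xi> r \<Longrightarrow> g w = (w - \<xi>) ^ k * h2 w"
    and rot: "\<And>w. w \<in> ball \<xi> r \<Longrightarrow> g (\<xi> + \<mu> * (w - \<xi>)) * f w = f (\<xi> + \<mu> * (w - \<xi>)) * g w"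
  shows "\<mu> ^ k = \<mu> ^ m"
proof -
  define \<sigma> where "\<sigma> w = \<xi> + \<mu> * (w - \<xi>)" for w
  have \<sigma>_ball: "\<sigma> ` ball \<xi> r \<subseteq> ball \<xi> r"
  proof clarify
    fix w assume "w \<in> ball \<xi> r"
    moreover have "norm \<mu> * norm (w - \<xi>) \<le> norm (w - \<xi>)"
      using assms(2) by (simp add: mult_left_le_one_le)
    ultimately show "\<sigma> w \<in> ball \<xi> r"
      by (simp add: \<sigma>_def dist_norm norm_mult norm_minus_commute)
  qed
  have hol_\<sigma>: "h \<circ> \<sigma> holomorphic_on ball \<xi> r" if "h holomorphic_on ball \<xi> r" for h
  proof (rule holomorphic_on_compose_gen[OF _ that \<sigma>_ball])
    show "\<sigma> holomorphic_on ball \<xi> r"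
      unfolding \<sigma>_def by (intro holomorphic_intros)
  qed
  have "(w - \<xi>) ^ (k + m) * (\<mu> ^ k * h2 (\<sigma> w) * h1 w)
      = (w - \<xi>) ^ (k + m) * (\<mu> ^ m * h1 (\<sigma> w) * h2 w)" if w: "w \<in> ball \<xi> r" for w
  proof -
    have \<sigma>w: "\<sigma> w \<in> ball \<xi> r" "\<sigma> w - \<xi> = \<mu> * (w - \<xi>)"
      using \<sigma>_ball w by (auto simp: \<sigma>_def image_subset_iff)
    have "(w - \<xi>) ^ (k + m) * (\<mu> ^ k * h2 (\<sigma> w) * h1 w) = g (\<sigma> w) * f w"
      using f[OF w] g[OF \<sigma>w(1)] \<sigma>w(2) by (simp add: power_add power_mult_distrib mult_ac)
    also have "\<dots> = f (\<sigma> w) * g w"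
      using rot[OF w] by (simp add: \<sigma>_def)
    also have "\<dots> = (w - \<xi>) ^ (k + m) * (\<mu> ^ m * h1 (\<sigma> w) * h2 w)"
      using f[OF \<sigma>w(1)] g[OF w] \<sigma>w(2) by (simp add: power_add power_mult_distrib mult_ac)
    finally show ?thesis .
  qed
  then have "\<mu> ^ k * h2 (\<sigma> \<xi>) * h1 \<xi> = \<mu> ^ m * h1 (\<sigma> \<xi>) * h2 \<xi>"
    by (rule holomorphic_power_factor_cancel[rotated 2])
       (use hol hol_\<sigma> \<open>0 < r\<close> in \<open>auto intro!: holomorphic_intros simp: o_def\<close>)
  then show ?thesis
    using nz by (simp add: \<sigma>_def)
qed

lemma rotation_identity_same_order:
  fixes f \<phi> h1 :: "complex \<Rightarrow> complex"
  assumes h\<phi>: "\<phi> holomorphic_on ball \<xi> r" and \<phi>_nz: "\<exists>w\<in>ball \<xi> r. \<phi> w \<noteq> 0"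
    and \<mu>: "norm \<mu> = 1" "\<And>n. n > 0 \<Longrightarrow> \<mu> ^ n \<noteq> 1"
    and "0 < \<rho>" and \<rho>: "ball \<xi> \<rho> \<subseteq> ball \<xi> r"
    and h1: "h1 holomorphic_on ball \<xi> \<rho>" "h1 \<xi> \<noteq> 0"
    and f: "\<And>w. w \<in> ball \<xi> \<rho> \<Longrightarrow> f w = (w - \<xi>) ^ m * h1 w"
    and rot: "\<And>w. w \<in> ball \<xi> r \<Longrightarrow> \<phi> (\<xi> + \<mu> * (w - \<xi>)) * f w = f (\<xi> + \<mu> * (w - \<xi>)) * \<phi> w"
  obtains \<rho>' h where "0 < \<rho>'" "\<rho>' \<le> \<rho>" "h holomorphic_on ball \<xi> \<rho>'" "h \<xi> \<noteq> 0"
    "\<And>w. w \<in> ball \<xi> \<rho>' \<Longrightarrow> \<phi> w = (w - \<xi>) ^ m * h w"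
proof -
  have "\<xi> \<in> ball \<xi> r"
    using \<open>0 < \<rho>\<close> \<rho> centre_in_ball by blast
  then obtain \<rho>\<^sub>\<phi> h k where "0 < \<rho>\<^sub>\<phi>" "ball \<xi> \<rho>\<^sub>\<phi> \<subseteq> ball \<xi> r"
      and h: "h holomorphic_on ball \<xi> \<rho>\<^sub>\<phi>" "h \<xi> \<noteq> 0"
      and \<phi>: "\<And>w. w \<in> ball \<xi> \<rho>\<^sub>\<phi> \<Longrightarrow> \<phi> w = (w - \<xi>) ^ k * h w"
    using holomorphic_factor_order[OF h\<phi> open_ball connected_ball _ \<phi>_nz] by metis
  define \<rho>' where "\<rho>' = min \<rho> \<rho>\<^sub>\<phi>"
  have \<rho>': "0 < \<rho>'" "\<rho>' \<le> \<rho>" "ball \<xi> \<rho>' \<subseteq> ball \<xi> \<rho>" "ball \<xi> \<rho>' \<subseteq> ball \<xi> \<rho>\<^sub>\<phi>"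
    using \<open>0 < \<rho>\<close> \<open>0 < \<rho>\<^sub>\<phi>\<close> by (auto simp: \<rho>'_def ball_min_Int)
  have "\<mu> ^ k = \<mu> ^ m"
  proof (rule rotation_identity_power_eq[of \<rho>' \<mu> h1 \<xi> h f m \<phi>])
    show "h1 holomorphic_on ball \<xi> \<rho>'" "h holomorphic_on ball \<xi> \<rho>'"
      using holomorphic_on_subset h1(1) h(1) \<rho>'(3,4) by blast+
    show "\<phi> (\<xi> + \<mu> * (w - \<xi>)) * f w = f (\<xi> + \<mu> * (w - \<xi>)) * \<phi> w" if "w \<in> ball \<xi> \<rho>'" for w
      using rot that \<rho>'(3) \<rho> by blast
  qed (use \<rho>' h1 h \<mu>(1) f \<phi> in auto)
  moreover have "\<mu> \<noteq> 0"
    using \<mu>(1) by auto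
  ultimately have "k = m"
    using power_eq_power_imp_eq_if_not_root_of_unity \<mu>(2) by blast
  show ?thesis
  proof (rule that[of \<rho>' h])
    show "\<phi> w = (w - \<xi>) ^ m * h w" if "w \<in> ball \<xi> \<rho>'" for w
      using \<phi>[of w] that \<rho>'(4) \<open>k = m\<close> by auto
  qed (use \<rho>' h holomorphic_on_subset[OF h(1) \<rho>'(4)] in auto)
qed

lemma proportional_if_rotation_identity:
  fixes f g :: "complex \<Rightarrow> complex"
  assumes hf: "f holomorphic_on ball \<xi> r" and hg: "g holomorphic_on ball \<xi> r"
    and f_nz: "\<exists>w\<in>ball \<xi> r. f w \<noteq> 0"
    and \<mu>: "norm \<mu> = 1" "\<And>n. n > 0 \<Longrightarrow> \<mu> ^ n \<noteq> 1"
    and rot: "\<And>w. w \<in> ball \<xi> r \<Longrightarrow> g (\<xi> + \<mu> * (w - \<xi>)) * f w = f (\<xi> + \<mu> * (w - \<xi>)) * g w"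
  shows "\<exists>c. \<forall>w\<in>ball \<xi> r. g w = c * f w"
proof -
  have \<xi>: "\<xi> \<in> ball \<xi> r"
    using f_nz by (metis centre_in_ball mem_ball zero_le_dist le_less_trans)
  obtain \<rho> h1 m where "0 < \<rho>" and \<rho>: "ball \<xi> \<rho> \<subseteq> ball \<xi> r"
      and h1: "h1 holomorphic_on ball \<xi> \<rho>" "h1 \<xi> \<noteq> 0"
      and f: "\<And>w. w \<in> ball \<xi> \<rho> \<Longrightarrow> f w = (w - \<xi>) ^ m * h1 w"
    using holomorphic_factor_order[OF hf open_ball connected_ball \<xi> f_nz] by metis
  note same_order = rotation_identity_same_order[of _ \<xi> r \<mu> \<rho> h1 f m]
  show ?thesis
  proof (cases "\<exists>w\<in>ball \<xi> r. g w \<noteq> 0")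
    case False
    then show ?thesis by (intro exI[of _ 0]) auto
  next
    case True
    then obtain \<rho>\<^sub>g h2 where "0 < \<rho>\<^sub>g" "\<rho>\<^sub>g \<le> \<rho>" and h2: "h2 holomorphic_on ball \<xi> \<rho>\<^sub>g"
        and g: "\<And>w. w \<in> ball \<xi> \<rho>\<^sub>g \<Longrightarrow> g w = (w - \<xi>) ^ m * h2 w"
      using same_order[OF hg True \<mu> \<open>0 < \<rho>\<close> \<rho> h1] f rot by metis
    define c where "c = h2 \<xi> / h1 \<xi>"
    define d where "d w = g w - c * f w" for w
    have "\<forall>w\<in>ball \<xi> r. d w = 0"
    proof (rule ccontr)
      assume "\<not> (\<forall>w\<in>ball \<xi> r. d w = 0)"
      moreover have "d holomorphic_on ball \<xi> r"
        unfolding d_def by (intro holomorphic_intros hf hg)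
      moreover have "d (\<xi> + \<mu> * (w - \<xi>)) * f w = f (\<xi> + \<mu> * (w - \<xi>)) * d w"
        if "w \<in> ball \<xi> r" for w
        using rot[OF that] by (simp add: d_def algebra_simps)
      ultimately obtain \<rho>\<^sub>d h3 where "0 < \<rho>\<^sub>d" "\<rho>\<^sub>d \<le> \<rho>"
          and h3: "h3 holomorphic_on ball \<xi> \<rho>\<^sub>d" "h3 \<xi> \<noteq> 0"
          and d: "\<And>w. w \<in> ball \<xi> \<rho>\<^sub>d \<Longrightarrow> d w = (w - \<xi>) ^ m * h3 w"
        using same_order[of d] \<mu> \<open>0 < \<rho>\<close> \<rho> h1 f by metis
      define \<rho>' where "\<rho>' = min \<rho>\<^sub>d \<rho>\<^sub>g"
      have \<rho>': "ball \<xi> \<rho>' \<subseteq> ball \<xi> \<rho>\<^sub>d" "ball \<xi> \<rho>' \<subseteq> ball \<xi> \<rho>\<^sub>g" "ball \<xi> \<rho>' \<subseteq> ball \<xi> \<rho>"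
        using \<open>\<rho>\<^sub>g \<le> \<rho>\<close> by (auto simp: \<rho>'_def)
      have "h3 \<xi> = h2 \<xi> - c * h1 \<xi>"
      proof (rule holomorphic_power_factor_cancel[of h3 \<xi> \<rho>' _ m])
        show "h3 holomorphic_on ball \<xi> \<rho>'"
          using h3(1) \<rho>'(1) by (rule holomorphic_on_subset)
        show "(\<lambda>w. h2 w - c * h1 w) holomorphic_on ball \<xi> \<rho>'"
          using holomorphic_on_subset[OF h2 \<rho>'(2)] holomorphic_on_subset[OF h1(1) \<rho>'(3)]
          by (intro holomorphic_intros)
        show "(w - \<xi>) ^ m * h3 w = (w - \<xi>) ^ m * (h2 w - c * h1 w)" if "w \<in> ball \<xi> \<rho>'" for w
        proof -
          have w: "w \<in> ball \<xi> \<rho>\<^sub>d" "w \<in> ball \<xi> \<rho>\<^sub>g" "w \<in> ball \<xi> \<rho>"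
            using that \<rho>' by blast+
          show ?thesis
            using d[OF w(1)] g[OF w(2)] f[OF w(3)] by (simp add: d_def algebra_simps)
        qed
        show "\<xi> \<in> ball \<xi> \<rho>'"
          using \<open>0 < \<rho>\<^sub>d\<close> \<open>0 < \<rho>\<^sub>g\<close> by (simp add: \<rho>'_def)
      qed
      with h3(2) h1(2) show False
        by (simp add: c_def)
    qed
    then show ?thesis
      by (intro exI[of _ c]) (simp add: d_def)
  qed
qed

lemma holomorphic_factor_eq_0_if_product_eq_0:
  assumes "f holomorphic_on S" "g holomorphic_on S" "open S" "connected S"
    and "\<And>z. z \<in> S \<Longrightarrow> f z * g z = 0"
    and "w \<in> S" "f w \<noteq> 0" "z \<in> S"
  shows "g z = 0"
proof (rule analytic_continuation_open[of "S \<inter> f -` (- {0})" S g "\<lambda>_. 0"])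
  show "open (S \<inter> f -` (- {0}))"
    using assms(1,3) by (intro continuous_open_preimage holomorphic_on_imp_continuous_on) auto
qed (use assms in auto)

lemma centre_islimpt_segment:
  fixes A v :: complex
  assumes "v \<noteq> 0"
  shows "A islimpt {A + of_real t * v | t. t \<in> {-1<..<1}}"
  unfolding islimpt_approachable
proof (intro allI impI)
  fix e :: real
  assume "0 < e"
  define t where "t = min (1 / 2) (e / (2 * norm v))"
  have "0 < t" "t < 1"
    using \<open>0 < e\<close> assms by (auto simp: t_def)
  moreover have "t * norm v < e"
  proof -
    have "t \<le> e / (2 * norm v)"
      by (simp add: t_def)
    then show ?thesis
      using \<open>0 < e\<close> assms by (simp add: field_simps)
  qed
  ultimately show "\<exists>x'\<in>{A + of_real t * v | t. t \<in> {-1<..<1}}. x' \<noteq> A \<and> dist x' A < e"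
    using assms by (intro bexI[of _ "A + of_real t * v"]) (auto simp: dist_norm norm_mult)
qed

(* For norm \<omega> = 1, the reflection in the line through A whose unit direction squares to \<omega>. *)
definition reflection :: "complex \<Rightarrow> complex \<Rightarrow> complex \<Rightarrow> complex" where
  "reflection A \<omega> z = A + \<omega> * cnj (z - A)"

lemma holomorphic_on_cnj_reflection:
  assumes "f holomorphic_on S" "open S" "reflection A \<omega> ` S \<subseteq> S"
  shows "(\<lambda>z. cnj (f (reflection A \<omega> z))) holomorphic_on S"
proof -
  have "(f \<circ> (\<lambda>w. A + \<omega> * (w - cnj A))) holomorphic_on cnj ` S"
    using assms(3) by (intro holomorphic_on_compose_gen[OF _ assms(1)] holomorphic_intros)
                      (auto simp: reflection_def)
  from holomorphic_on_compose_cnj_cnj[OF this assms(2)] show ?thesis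
    by (simp add: o_def reflection_def)
qed

lemma reflection_ball_subset:
  assumes "norm \<omega> = 1"
  shows "reflection A \<omega> ` ball A r \<subseteq> ball A r"
  using assms by (auto simp: reflection_def dist_norm norm_mult norm_minus_commute simp flip: complex_cnj_diff)

lemma reflection_fixes_line:
  "reflection A (cis (2 * \<theta>)) (A + of_real t * cis \<theta>) = A + of_real t * cis \<theta>"
  by (simp add: reflection_def cis_cnj cis_mult)

lemma reflection_product_identity:
  fixes f g :: "complex \<Rightarrow> complex"
  assumes hf: "f holomorphic_on S" and hg: "g holomorphic_on S" and "open S" "connected S"
    and refl: "reflection A \<omega> ` S \<subseteq> S"
    and "U \<subseteq> S" "\<xi> \<in> S" "\<xi> islimpt U"
    and fixed: "\<And>w. w \<in> U \<Longrightarrow> reflection A \<omega> w = w"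
    and norm_eq: "\<And>w. w \<in> U \<Longrightarrow> norm (g w) = norm (f w)"
    and "z \<in> S"
  shows "g z * cnj (g (reflection A \<omega> z)) = f z * cnj (f (reflection A \<omega> z))"
proof -
  define \<Phi> where "\<Phi> w = g w * cnj (g (reflection A \<omega> w)) - f w * cnj (f (reflection A \<omega> w))" for w
  have "\<Phi> z = 0"
  proof (rule analytic_continuation[of \<Phi> S U \<xi>])
    show "\<Phi> holomorphic_on S"
      unfolding \<Phi>_def
      using holomorphic_on_cnj_reflection[OF hf \<open>open S\<close> refl]
            holomorphic_on_cnj_reflection[OF hg \<open>open S\<close> refl]
      by (intro holomorphic_intros hf hg)
    show "\<Phi> w = 0" if "w \<in> U" for w
      using fixed[OF that] norm_eq[OF that] by (simp add: \<Phi>_def flip: complex_norm_square)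
  qed (use assms in auto)
  then show ?thesis by (simp add: \<Phi>_def)
qed

lemma open_strip: "open strip"
  unfolding strip_def by (intro open_Collect_less continuous_intros)

lemma connected_strip: "connected strip"
proof -
  have "strip = {z. Im z < 1} \<inter> {z. Im z > -1}"
    unfolding strip_def by auto
  then have "convex strip"
    by (metis convex_Int convex_halfspace_Im_lt convex_halfspace_Im_gt)
  then show ?thesis
    by (rule convex_connected)
qed

lemma ball_subset_strip:
  assumes "Im A = 0"
  shows "ball A 1 \<subseteq> strip"
proof
  fix z assume "z \<in> ball A 1"
  then have "\<bar>Im (z - A)\<bar> < 1"
    by (metis abs_Im_le_cmod dist_norm le_less_trans mem_ball norm_minus_commute)
  then show "z \<in> strip"
    using assms by (simp add: strip_def)
qed

lemma strip_two_reflections_identity: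
  fixes f g :: "complex \<Rightarrow> complex" and a \<theta> :: real
  defines "A \<equiv> complex_of_real a"
  defines "R \<equiv> reflection A (cis (2 * \<theta>))" and "\<sigma> \<equiv> \<lambda>z. A + cis (- 2 * \<theta>) * (z - A)"
  assumes hf: "f holomorphic_on strip" and hg: "g holomorphic_on strip"
    and real_eq: "\<And>x::real. norm (g (of_real x)) = norm (f (of_real x))"
    and line_eq: "\<And>t::real. t \<in> {-1<..<1} \<Longrightarrow> norm (g (A + of_real t * cis \<theta>)) = norm (f (A + of_real t * cis \<theta>))"
    and z: "z \<in> ball A 1"
  shows "cnj (f (R z)) * (g (\<sigma> z) * f z - f (\<sigma> z) * g z) = 0"
proof -
  have B: "ball A 1 \<subseteq> strip"
    by (rule ball_subset_strip) (simp add: A_def)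
  have \<sigma>_ball: "\<sigma> z \<in> ball A 1"
    using z by (simp add: \<sigma>_def dist_norm norm_mult norm_minus_commute)
  have real_identity: "g w * cnj (g (cnj w)) = f w * cnj (f (cnj w))" if "w \<in> strip" for w
  proof -
    let ?I = "{0 + complex_of_real t * 1 | t. t \<in> {-1<..<1}}"
    have "g w * cnj (g (reflection 0 1 w)) = f w * cnj (f (reflection 0 1 w))"
    proof (rule reflection_product_identity[OF hf hg open_strip connected_strip])
      show "reflection 0 1 ` strip \<subseteq> strip" "?I \<subseteq> strip"
        by (auto simp: reflection_def strip_def)
      show "0 islimpt ?I"
        by (rule centre_islimpt_segment) simp
    qed (use real_eq that in \<open>auto simp: reflection_def strip_def\<close>)
    then show ?thesis
      by (simp add: reflection_def)
  qed
  have line_identity: "g z * cnj (g (R z)) = f z * cnj (f (R z))"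
    unfolding R_def
  proof (rule reflection_product_identity[OF holomorphic_on_subset[OF hf B] holomorphic_on_subset[OF hg B]
                open_ball connected_ball reflection_ball_subset])
    let ?U = "{A + complex_of_real t * cis \<theta> | t. t \<in> {-1<..<1}}"
    show "A islimpt ?U"
      by (rule centre_islimpt_segment) simp
    show "?U \<subseteq> ball A 1"
      by (auto simp: dist_norm norm_mult)
  qed (use line_eq z reflection_fixes_line in auto)
  have "cnj (\<sigma> z) = R z"
    by (simp add: A_def R_def \<sigma>_def reflection_def cis_cnj)
  then have rotated_identity: "g (\<sigma> z) * cnj (g (R z)) = f (\<sigma> z) * cnj (f (R z))"
    using real_identity[of "\<sigma> z"] \<sigma>_ball B by auto
  have "cnj (f (R z)) * (g (\<sigma> z) * f z - f (\<sigma> z) * g z)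
      = g (\<sigma> z) * (f z * cnj (f (R z))) - g z * (f (\<sigma> z) * cnj (f (R z)))"
    by (simp add: algebra_simps)
  also have "\<dots> = g (\<sigma> z) * (g z * cnj (g (R z))) - g z * (g (\<sigma> z) * cnj (g (R z)))"
    by (simp only: line_identity rotated_identity)
  also have "\<dots> = 0"
    by (simp add: algebra_simps)
  finally show ?thesis .
qed

lemma strip_rotation_identity:
  fixes f g :: "complex \<Rightarrow> complex" and a \<theta> :: real
  defines "A \<equiv> complex_of_real a"
  defines "\<sigma> \<equiv> \<lambda>z. A + cis (- 2 * \<theta>) * (z - A)"
  assumes hf: "f holomorphic_on strip" and hg: "g holomorphic_on strip"
    and real_eq: "\<And>x::real. norm (g (of_real x)) = norm (f (of_real x))"
    and line_eq: "\<And>t::real. t \<in> {-1<..<1} \<Longrightarrow> norm (g (A + of_real t * cis \<theta>)) = norm (f (A + of_real t * cis \<theta>))"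
    and t0: "t0 \<in> {-1<..<1}" "f (A + of_real t0 * cis \<theta>) \<noteq> 0"
    and z: "z \<in> ball A 1"
  shows "g (\<sigma> z) * f z = f (\<sigma> z) * g z"
proof -
  have B: "ball A 1 \<subseteq> strip"
    by (rule ball_subset_strip) (simp add: A_def)
  have "\<sigma> holomorphic_on ball A 1" "\<sigma> ` ball A 1 \<subseteq> ball A 1"
    by (auto intro!: holomorphic_intros simp: \<sigma>_def dist_norm norm_mult norm_minus_commute)
  note rotate = holomorphic_on_compose_gen[OF this(1) holomorphic_on_subset[OF _ B] this(2), unfolded o_def]
  let ?P = "\<lambda>z. cnj (f (reflection A (cis (2 * \<theta>)) z))"
  let ?H = "\<lambda>z. g (\<sigma> z) * f z - f (\<sigma> z) * g z"
  have "?H z = 0"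
  proof (rule holomorphic_factor_eq_0_if_product_eq_0[of ?P "ball A 1" ?H "A + of_real t0 * cis \<theta>" z])
    show "?P holomorphic_on ball A 1"
      by (rule holomorphic_on_cnj_reflection[OF holomorphic_on_subset[OF hf B] open_ball reflection_ball_subset]) simp
    show "?H holomorphic_on ball A 1"
      using rotate[OF hf] rotate[OF hg] holomorphic_on_subset[OF hf B] holomorphic_on_subset[OF hg B]
      by (intro holomorphic_intros)
    show "?P w * ?H w = 0" if "w \<in> ball A 1" for w
      using strip_two_reflections_identity[OF hf hg real_eq line_eq[unfolded A_def] that[unfolded A_def]]
      by (simp add: A_def \<sigma>_def)
    show "?P (A + of_real t0 * cis \<theta>) \<noteq> 0"
      using t0(2) by (simp add: reflection_fixes_line)
  qed (use t0(1) z in \<open>auto simp: dist_norm norm_mult\<close>)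
  then show ?thesis
    by simp
qed

lemma strip_eq_0_if_segment_eq_0:
  fixes a \<theta> :: real
  assumes "f holomorphic_on strip"
    and "\<And>t::real. t \<in> {-1<..<1} \<Longrightarrow> f (of_real a + of_real t * cis \<theta>) = 0"
    and "z \<in> strip"
  shows "f z = 0"
proof (rule analytic_continuation[OF assms(1) open_strip connected_strip])
  let ?U = "{complex_of_real a + of_real t * cis \<theta> | t. t \<in> {-1<..<1}}"
  have "ball (complex_of_real a) 1 \<subseteq> strip"
    by (rule ball_subset_strip) simp
  then show "?U \<subseteq> strip" "complex_of_real a \<in> strip"
    by (auto simp: dist_norm norm_mult)
  show "complex_of_real a islimpt ?U"
    by (rule centre_islimpt_segment) simp
qed (use assms(2,3) in auto)

theorem theorem4p5:
  fixes f g :: "complex \<Rightarrow> complex" and a \<theta> :: real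
  assumes "f \<in> H2_strip" and "g \<in> H2_strip"
    and "\<And>x::real. cmod (g (of_real x)) = cmod (f (of_real x))"
    and "\<And>t::real. t \<in> {-1<..<1} \<Longrightarrow>
           cmod (g (of_real a + of_real t * cis \<theta>)) = cmod (f (of_real a + of_real t * cis \<theta>))"
    and "\<theta> / pi \<notin> \<rat>"
  shows "\<exists>c::complex. cmod c = 1 \<and> (\<forall>z\<in>strip. g z = c * f z)"
proof -
  have hf: "f holomorphic_on strip" and hg: "g holomorphic_on strip"
    using assms(1,2) unfolding H2_strip_def by auto
  show ?thesis
  proof (cases "\<exists>t\<in>{-1<..<1}. f (of_real a + of_real t * cis \<theta>) \<noteq> 0")
    case False
    then have "f z = 0" "g z = 0" if "z \<in> strip" for z
      using strip_eq_0_if_segment_eq_0[of f a \<theta> z] strip_eq_0_if_segment_eq_0[of g a \<theta> z]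
            hf hg that assms(4)
      by auto
    then show ?thesis
      by (intro exI[of _ 1]) auto
  next
    case True
    then obtain t0 where t0: "t0 \<in> {-1<..<1}" "f (of_real a + of_real t0 * cis \<theta>) \<noteq> 0"
      by blast
    have B: "ball (of_real a) 1 \<subseteq> strip"
      by (rule ball_subset_strip) simp
    have t0_ball: "of_real a + of_real t0 * cis \<theta> \<in> ball (of_real a) 1"
      using t0(1) by (auto simp: dist_norm norm_mult)
    have rot: "g (of_real a + cis (- 2 * \<theta>) * (z - of_real a)) * f z
             = f (of_real a + cis (- 2 * \<theta>) * (z - of_real a)) * g z" if "z \<in> ball (of_real a) 1" for z
      by (rule strip_rotation_identity[OF hf hg]) (use assms(3,4) t0 that in auto)
    have "cis (- 2 * \<theta>) ^ n \<noteq> 1" if "n > 0" for n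
      using cis_multiple_not_root_of_unity[OF assms(5), of "- 2" n] that by simp
    then obtain c where c: "\<forall>z\<in>ball (of_real a) 1. g z = c * f z"
      using proportional_if_rotation_identity[OF holomorphic_on_subset[OF hf B] holomorphic_on_subset[OF hg B]]
            rot t0_ball t0(2) by (metis norm_cis)
    have "g z - c * f z = 0" if "z \<in> strip" for z
    proof (rule strip_eq_0_if_segment_eq_0[where f = "\<lambda>z. g z - c * f z" and a = a and \<theta> = \<theta>])
      show "(\<lambda>z. g z - c * f z) holomorphic_on strip"
        by (intro holomorphic_intros hf hg)
    qed (use c that in \<open>auto simp: dist_norm norm_mult\<close>)
    moreover have "cmod c = 1"
      using c t0_ball t0(2) assms(4)[OF t0(1)] by (auto simp: norm_mult)
    ultimately show ?thesis
      by auto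
  qed
qed

end
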